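(* For any $(\mu,\varphi,\omega^*,\omega^\varepsilon)\in\mathbb F^\times\times\mathbb F^3$: (i) there exists $(a,b,c,\lambda)\in(\mathbb F^\times)^4$ that is feasible for $(\mu,\varphi,\omega^*,\omega^\varepsilon)$; (ii) if $(a,b,c,\lambda)$ is feasible for $(\mu,\varphi,\omega^*,\omega^\varepsilon)$, then the equivalence class of $(a,b,c,\lambda)$ under $\approx$ consists exactly of all elements of $(\mathbb F^\times)^4$ that are feasible for $(\mu,\varphi,\omega^*,\omega^\varepsilon)$.
   Context: $\mathbb F$ is an algebraically closed field and $q\in\mathbb F^\times$ is a root of unity of order $d\notin\{1,2,4\}$. $\sqrt{x}$ denotes a fixed root of $t^2-x$. $(a,b,c,\lambda)\in(\mathbb F^\times)^4$ is feasible for $(\mu,\varphi,\omega^*,\omega^\varepsilon)\in\mathbb F^\times\times\mathbb F^3$ if $\mu=b\lambda^{-1}$, $\varphi=(c+c^{-1})(\lambda-\lambda^{-1})-(a+a^{-1})(bq-b^{-1}q^{-1})$, $\omega^*=(c+c^{-1})(a+a^{-1})+(b+b^{-1})(\lambda q+\lambda^{-1}q^{-1})$, $\omega^\varepsilon=(a+a^{-1})(b+b^{-1})+(c+c^{-1})(\lambda q+\lambda^{-1}q^{-1})$. $\{\pm1\}$ acts on $(\mathbb F^\times)^4$ by $(-1)\cdot(a,b,c,\lambda)=(-a,-b,-c,-\lambda)$; writing $[\cdot]$ for $\{\pm1\}$-orbits, $\mathfrak S_4$ acts on the right on the orbit set by $[a,b,c,\lambda](1\,2)=[a,b,c^{-1},\lambda]$,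 $[a,b,c,\lambda](3\,4)=[a^{-1},b,c,\lambda]$, $[a,b,c,\lambda](2\,3)=[a/s,b/s,c/s,\lambda/s]$ with $s=\sqrt{abc\lambda q}$. $(a,b,c,\lambda)\approx(\bar a,\bar b,\bar c,\bar\lambda)$ means their $\{\pm1\}$-orbits lie in the same $\mathfrak S_4$-orbit. *)

theory Defs
  imports "HOL-Computational_Algebra.Polynomial"
begin

type_synonym 'a quad = "'a \<times> 'a \<times> 'a \<times> 'a"

definition nonzero4 :: "'a::field quad \<Rightarrow> bool" where
  "nonzero4 x = (case x of (a,b,c,l) \<Rightarrow> a \<noteq> 0 \<and> b \<noteq> 0 \<and> c \<noteq> 0 \<and> l \<noteq> 0)"

definition root_of_unity_order :: "'a::field \<Rightarrow> nat \<Rightarrow> bool" where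
  "root_of_unity_order q d = (0 < d \<and> q ^ d = 1 \<and> (\<forall>k. 0 < k \<and> k < d \<longrightarrow> q ^ k \<noteq> 1))"

definition feasible :: "'a::field \<Rightarrow> 'a quad \<Rightarrow> 'a quad \<Rightarrow> bool" where
  "feasible q x p = (case x of (a,b,c,l) \<Rightarrow> case p of (mu,phi,ws,we) \<Rightarrow>
     mu = b / l \<and>
     phi = (c + inverse c) * (l - inverse l) - (a + inverse a) * (b * q - inverse b * inverse q) \<and>
     ws = (c + inverse c) * (a + inverse a) + (b + inverse b) * (l * q + inverse l * inverse q) \<and>
     we = (a + inverse a) * (b + inverse b) + (c + inverse c) * (l * q + inverse l * inverse q))"

text \<open>Representatives of the generator actions of (1 2), (3 4), (2 3) and of -1,
  with sq a fixed square-root function.\<close>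
definition act12 :: "'a::field quad \<Rightarrow> 'a quad" where
  "act12 x = (case x of (a,b,c,l) \<Rightarrow> (a, b, inverse c, l))"

definition act34 :: "'a::field quad \<Rightarrow> 'a quad" where
  "act34 x = (case x of (a,b,c,l) \<Rightarrow> (inverse a, b, c, l))"

definition act23 :: "('a::field \<Rightarrow> 'a) \<Rightarrow> 'a \<Rightarrow> 'a quad \<Rightarrow> 'a quad" where
  "act23 sq q x = (case x of (a,b,c,l) \<Rightarrow>
     (let s = sq (a * b * c * l * q) in (a / s, b / s, c / s, l / s)))"

definition negq :: "'a::field quad \<Rightarrow> 'a quad" where
  "negq x = (case x of (a,b,c,l) \<Rightarrow> (-a, -b, -c, -l))"

definition gen_step :: "('a::field \<Rightarrow> 'a) \<Rightarrow> 'a \<Rightarrow> 'a quad \<Rightarrow> 'a quad \<Rightarrow> bool" where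
  "gen_step sq q x y = (y = negq x \<or> y = act12 x \<or> y = act34 x \<or> y = act23 sq q x)"

text \<open>x \<approx> y: both in (F^*)^4 and their {+-1}-orbits lie in the same S_4-orbit,
  i.e. y is reachable from x by the equivalence closure of the generator steps.\<close>
definition approx :: "('a::field \<Rightarrow> 'a) \<Rightarrow> 'a \<Rightarrow> 'a quad \<Rightarrow> 'a quad \<Rightarrow> bool" where
  "approx sq q x y = (nonzero4 x \<and> nonzero4 y \<and> equivclp (gen_step sq q) x y)"

end

theory Submission
  imports Defs
begin

(* Put \<rho>\<^sup>2 = q\<mu>. For (a,b,c,\<lambda>) with b = \<mu>\<lambda> the four numbers c/(\<rho>\<lambda>), 1/(c\<rho>\<lambda>), a\<rho>\<lambda>,
   \<rho>\<lambda>/a have product 1, and \<phi>, \<omega>*, \<omega>\<^sup>\<epsilon> are affine functions of their elementary symmetric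
   functions; since d \<notin> {1,2,4} gives 1 + q\<^sup>2 \<noteq> 0, this affine map is invertible. So feasibility says
   exactly that b = \<mu>\<lambda> and that these four numbers are the roots of one quartic determined by
   (\<mu>,\<phi>,\<omega>*,\<omega>\<^sup>\<epsilon>). Over an algebraically closed field that quartic has roots, which gives (i).
   The generators (1 2), (3 4), (2 3) permute the roots by the same transpositions and -1 fixes them, so
   every generator step preserves feasibility; conversely the roots determine the quadruple up to sign,
   and adjacent transpositions generate the symmetric group, so any two feasible quadruples are
   connected by generator steps. *)

section \<open>Elementary symmetric functions\<close>

definition esym2 :: "'a::comm_ring_1 \<times> 'a \<Rightarrow> 'a \<times> 'a" where
  "esym2 s = (case s of (s1,s2) \<Rightarrow> (s1+s2, s1*s2))"

definition esym3 :: "'a::comm_ring_1 \<times> 'a \<times> 'a \<Rightarrow> 'a \<times> 'a \<times> 'a" where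
  "esym3 s = (case s of (s1,s2,s3) \<Rightarrow> (s1+s2+s3, s1*s2+s1*s3+s2*s3, s1*s2*s3))"

definition esym4 :: "'a::comm_ring_1 quad \<Rightarrow> 'a quad" where
  "esym4 s = (case s of (s1,s2,s3,s4) \<Rightarrow>
     (s1+s2+s3+s4, s1*s2+s1*s3+s1*s4+s2*s3+s2*s4+s3*s4,
      s1*s2*s3+s1*s2*s4+s1*s3*s4+s2*s3*s4, s1*s2*s3*s4))"

lemma esym2_swap: "esym2 (v,u) = esym2 (u,v)"
  by (simp add: esym2_def algebra_simps)

lemma esym3_swap: "esym3 (v,u,w) = esym3 (u,v,w)" "esym3 (u,w,v) = esym3 (u,v,w)"
  by (simp_all add: esym3_def algebra_simps)

lemma esym4_swap:
  "esym4 (v,u,w,x) = esym4 (u,v,w,x)" "esym4 (u,w,v,x) = esym4 (u,v,w,x)"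
  "esym4 (u,v,x,w) = esym4 (u,v,w,x)"
  by (simp_all add: esym4_def algebra_simps)

lemma esym3_cons: "esym3 (x,y,z) = (case esym2 (y,z) of (f1,f2) \<Rightarrow> (x+f1, x*f1+f2, x*f2))"
  by (simp add: esym2_def esym3_def algebra_simps)

lemma esym4_cons:
  "esym4 (x,y,z,w) = (case esym3 (y,z,w) of (f1,f2,f3) \<Rightarrow> (x+f1, x*f1+f2, x*f2+f3, x*f3))"
  by (simp add: esym3_def esym4_def algebra_simps)

lemma esym2_cons_cancel: "esym2 (x,y) = esym2 (x,z) \<Longrightarrow> y = z"
  by (simp add: esym2_def)

lemma esym3_cons_cancel: "esym3 (x,y1,y2) = esym3 (x,z1,z2) \<Longrightarrow> esym2 (y1,y2) = esym2 (z1,z2)"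
  by (auto simp: esym3_cons split: prod.splits)

lemma esym4_cons_cancel:
  "esym4 (x,y1,y2,y3) = esym4 (x,z1,z2,z3) \<Longrightarrow> esym3 (y1,y2,y3) = esym3 (z1,z2,z3)"
  by (auto simp: esym4_cons split: prod.splits)

lemma esym2_eq_imp_root:
  fixes s1 s2 t1 t2 :: "'a::idom"
  assumes "esym2 (s1,s2) = esym2 (t1,t2)"
  shows "t1 = s1 \<or> t1 = s2"
proof -
  have "(t1 - s1) * (t1 - s2) = (t1 - t1) * (t1 - t2)"
    using assms by (simp add: esym2_def) algebra
  then show ?thesis by simp
qed

lemma esym3_eq_imp_root:
  fixes s1 s2 s3 t1 t2 t3 :: "'a::idom"
  assumes "esym3 (s1,s2,s3) = esym3 (t1,t2,t3)"
  shows "t1 = s1 \<or> t1 = s2 \<or> t1 = s3"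
proof -
  have "(t1 - s1) * (t1 - s2) * (t1 - s3) = (t1 - t1) * (t1 - t2) * (t1 - t3)"
    using assms by (simp add: esym3_def) algebra
  then show ?thesis by simp
qed

lemma esym4_eq_imp_root:
  fixes s1 s2 s3 s4 t1 t2 t3 t4 :: "'a::idom"
  assumes "esym4 (s1,s2,s3,s4) = esym4 (t1,t2,t3,t4)"
  shows "t1 = s1 \<or> t1 = s2 \<or> t1 = s3 \<or> t1 = s4"
proof -
  have "(t1 - s1) * (t1 - s2) * (t1 - s3) * (t1 - s4) = (t1 - t1) * (t1 - t2) * (t1 - t3) * (t1 - t4)"
    using assms by (simp add: esym4_def) algebra
  then show ?thesis by simp
qed

lemma esym2_eq_transfer:
  fixes P :: "'a::idom \<Rightarrow> 'a \<Rightarrow> bool"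
  assumes swap: "\<And>u v. P u v \<Longrightarrow> P v u"
    and P: "P s1 s2" and eq: "esym2 (s1,s2) = esym2 (t1,t2)"
  shows "P t1 t2"
proof -
  obtain u where P': "P t1 u" and eq': "esym2 (t1,u) = esym2 (t1,t2)"
    using esym2_eq_imp_root[OF eq]
  proof (elim disjE)
    assume "t1 = s1" then show thesis using that P eq by simp
  next
    assume "t1 = s2" then show thesis using that swap[OF P] eq esym2_swap by metis
  qed
  with esym2_cons_cancel show ?thesis by metis
qed

lemma esym3_eq_transfer:
  fixes P :: "'a::idom \<Rightarrow> 'a \<Rightarrow> 'a \<Rightarrow> bool"
  assumes swap12: "\<And>u v w. P u v w \<Longrightarrow> P v u w"
    and swap23: "\<And>u v w. P u v w \<Longrightarrow> P u w v"
    and P: "P s1 s2 s3" and eq: "esym3 (s1,s2,s3) = esym3 (t1,t2,t3)"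
  shows "P t1 t2 t3"
proof -
  obtain u v where P': "P t1 u v" and eq': "esym3 (t1,u,v) = esym3 (t1,t2,t3)"
    using esym3_eq_imp_root[OF eq]
  proof (elim disjE)
    assume "t1 = s1" then show thesis using that P eq by simp
  next
    assume "t1 = s2" then show thesis using that swap12[OF P] eq esym3_swap(1) by metis
  next
    assume "t1 = s3" then show thesis using that swap12[OF swap23[OF P]] eq esym3_swap by metis
  qed
  show ?thesis
    using esym2_eq_transfer[of "P t1", OF swap23 P' esym3_cons_cancel[OF eq']] .
qed

lemma esym4_eq_transfer:
  fixes P :: "'a::idom \<Rightarrow> 'a \<Rightarrow> 'a \<Rightarrow> 'a \<Rightarrow> bool"
  assumes swap12: "\<And>u v w x. P u v w x \<Longrightarrow> P v u w x"
    and swap23: "\<And>u v w x. P u v w x \<Longrightarrow> P u w v x"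
    and swap34: "\<And>u v w x. P u v w x \<Longrightarrow> P u v x w"
    and P: "P s1 s2 s3 s4" and eq: "esym4 (s1,s2,s3,s4) = esym4 (t1,t2,t3,t4)"
  shows "P t1 t2 t3 t4"
proof -
  obtain u v w where P': "P t1 u v w" and eq': "esym4 (t1,u,v,w) = esym4 (t1,t2,t3,t4)"
    using esym4_eq_imp_root[OF eq]
  proof (elim disjE)
    assume "t1 = s1" then show thesis using that P eq by simp
  next
    assume "t1 = s2" then show thesis using that swap12[OF P] eq esym4_swap(1) by metis
  next
    assume "t1 = s3" then show thesis using that swap12[OF swap23[OF P]] eq esym4_swap(1,2) by metis
  next
    assume "t1 = s4"
    then show thesis using that swap12[OF swap23[OF swap34[OF P]]] eq esym4_swap by metis
  qed
  show ?thesis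
    using esym3_eq_transfer[of "P t1", OF swap23 swap34 P' esym4_cons_cancel[OF eq']] .
qed

lemma esym2_surj: "\<exists>s. esym2 s = (e1, e2::'a::alg_closed_field)"
proof -
  obtain x where "poly [:e2, -e1, 1:] x = 0"
    using alg_closed_imp_poly_has_root[of "[:e2, -e1, 1:]"] by auto
  then have "esym2 (x, e1 - x) = (e1, e2)"
    by (simp add: esym2_def algebra_simps)
  then show ?thesis ..
qed

lemma esym3_surj: "\<exists>s. esym3 s = (e1, e2, e3::'a::alg_closed_field)"
proof -
  obtain x where root: "poly [:-e3, e2, -e1, 1:] x = 0"
    using alg_closed_imp_poly_has_root[of "[:-e3, e2, -e1, 1:]"] by auto
  obtain y z where "esym2 (y,z) = (e1 - x, e2 - x * (e1 - x))"
    using esym2_surj by (metis surj_pair)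
  then have "esym3 (x,y,z) = (e1, e2, x * (e2 - x * (e1 - x)))"
    by (simp add: esym3_cons)
  also have "x * (e2 - x * (e1 - x)) = e3"
    using root by (simp add: algebra_simps)
  finally show ?thesis ..
qed

lemma esym4_surj: "\<exists>s. esym4 s = (e1, e2, e3, e4::'a::alg_closed_field)"
proof -
  obtain x where root: "poly [:e4, -e3, e2, -e1, 1:] x = 0"
    using alg_closed_imp_poly_has_root[of "[:e4, -e3, e2, -e1, 1:]"] by auto
  obtain y z w where "esym3 (y,z,w) = (e1 - x, e2 - x * (e1 - x), e3 - x * (e2 - x * (e1 - x)))"
    using esym3_surj by (metis prod_cases3)
  then have "esym4 (x,y,z,w) = (e1, e2, e3, x * (e3 - x * (e2 - x * (e1 - x))))"
    by (simp add: esym4_cons)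
  also have "x * (e3 - x * (e2 - x * (e1 - x))) = e4"
    using root by (simp add: algebra_simps)
  finally show ?thesis ..
qed

section \<open>Roots of unity\<close>

lemma root_of_unity_order_nonzero: "root_of_unity_order q d \<Longrightarrow> q \<noteq> 0"
  by (auto simp: root_of_unity_order_def power_0_left)

lemma root_of_unity_order_dvd:
  assumes q: "root_of_unity_order q d" and "q ^ n = 1"
  shows "d dvd n"
proof -
  have d: "0 < d" "q ^ d = 1" "\<And>k. 0 < k \<Longrightarrow> k < d \<Longrightarrow> q ^ k \<noteq> 1"
    using q by (auto simp: root_of_unity_order_def)
  have "q ^ n = q ^ (d * (n div d) + n mod d)"
    by simp
  also have "\<dots> = (q ^ d) ^ (n div d) * q ^ (n mod d)"
    by (simp only: power_add power_mult)
  finally have "q ^ (n mod d) = 1"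
    using d(2) \<open>q ^ n = 1\<close> by simp
  then have "n mod d = 0"
    using d(3)[of "n mod d"] mod_less_divisor[OF d(1)] by blast
  then show ?thesis
    by (rule mod_0_imp_dvd)
qed

lemma one_plus_square_nonzero:
  assumes q: "root_of_unity_order q d" and "d \<notin> {1, 2, 4}"
  shows "1 + q\<^sup>2 \<noteq> 0"
proof
  assume "1 + q\<^sup>2 = 0"
  then have "q\<^sup>2 = -1"
    by (simp add: eq_neg_iff_add_eq_0 add.commute)
  then have "q ^ 4 = 1"
    using power_mult[of q 2 2] by simp
  then have "d dvd 4"
    by (rule root_of_unity_order_dvd[OF q])
  then have "d \<in> {1, 2, 4}"
    using dvd_imp_le[of d 4] q by (cases "d = 3") (auto simp: root_of_unity_order_def)
  with assms(2) show False by blast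
qed

section \<open>The roots attached to a quadruple\<close>

definition roots_of :: "'a::field \<Rightarrow> 'a quad \<Rightarrow> 'a quad" where
  "roots_of \<rho> x = (case x of (a,b,c,l) \<Rightarrow> (c/(\<rho>*l), inverse (c*\<rho>*l), a*\<rho>*l, \<rho>*l/a))"

lemma roots_of_negq: "roots_of \<rho> (negq x) = roots_of \<rho> x"
  by (cases x) (simp add: roots_of_def negq_def)

lemma roots_of_act12: "roots_of \<rho> x = (s1,s2,s3,s4) \<Longrightarrow> roots_of \<rho> (act12 x) = (s2,s1,s3,s4)"
  by (cases x) (auto simp: roots_of_def act12_def field_simps)

lemma roots_of_act34: "roots_of \<rho> x = (s1,s2,s3,s4) \<Longrightarrow> roots_of \<rho> (act34 x) = (s1,s2,s4,s3)"
  by (cases x) (auto simp: roots_of_def act34_def field_simps)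

lemma roots_of_act23:
  fixes a b c l \<rho> q \<mu> :: "'a::field"
  assumes sq: "\<forall>x. (sq x)\<^sup>2 = x" and \<rho>: "\<rho>\<^sup>2 = q*\<mu>" and "q \<noteq> 0"
    and x: "nonzero4 (a,b,c,l)" "b = \<mu>*l" and roots: "roots_of \<rho> (a,b,c,l) = (s1,s2,s3,s4)"
  shows "roots_of \<rho> (act23 sq q (a,b,c,l)) = (s1,s3,s2,s4)"
proof -
  define s where "s = sq (a*b*c*l*q)"
  have s2: "s\<^sup>2 = a*\<mu>*l*c*l*q"
    using sq x by (simp add: s_def mult.commute mult.left_commute)
  have nz: "a \<noteq> 0" "c \<noteq> 0" "l \<noteq> 0" "\<mu> \<noteq> 0" "s \<noteq> 0" "\<rho> \<noteq> 0"
    using x s2 \<rho> \<open>q \<noteq> 0\<close> by (auto simp: nonzero4_def)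
  have q: "q = \<rho>\<^sup>2/\<mu>"
    using \<rho> nz by simp
  have "c/s/(\<rho>*(l/s)) = c/(\<rho>*l)" and "\<rho>*(l/s)/(a/s) = \<rho>*l/a"
    and "inverse (c/s*\<rho>*(l/s)) = a*\<rho>*l" and "a/s*\<rho>*(l/s) = inverse (c*\<rho>*l)"
    using s2 nz unfolding q by (simp_all add: field_simps power2_eq_square)
  moreover have "act23 sq q (a,b,c,l) = (a/s, b/s, c/s, l/s)"
    by (simp add: act23_def s_def Let_def)
  ultimately show ?thesis
    using roots by (simp only: roots_of_def prod.case prod.inject)
qed

lemma roots_of_eq_imp_eq_or_negq:
  fixes a b c l a' b' c' l' \<rho> \<mu> :: "'a::field"
  assumes "nonzero4 (a,b,c,l)" "nonzero4 (a',b',c',l')" "b = \<mu>*l" "b' = \<mu>*l'" "\<rho> \<noteq> 0"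
    and eq: "roots_of \<rho> (a',b',c',l') = roots_of \<rho> (a,b,c,l)"
  shows "(a',b',c',l') = (a,b,c,l) \<or> (a',b',c',l') = negq (a,b,c,l)"
proof -
  have nz: "a \<noteq> 0" "c \<noteq> 0" "l \<noteq> 0" "a' \<noteq> 0" "c' \<noteq> 0" "l' \<noteq> 0"
    using assms(1,2) by (auto simp: nonzero4_def)
  have s1: "c'/(\<rho>*l') = c/(\<rho>*l)" and s3: "a'*\<rho>*l' = a*\<rho>*l" and s4: "\<rho>*l'/a' = \<rho>*l/a"
    using eq by (simp_all add: roots_of_def)
  have "(a'*\<rho>*l') * (\<rho>*l'/a') = (a*\<rho>*l) * (\<rho>*l/a)"
    by (simp only: s3 s4)
  then have "(\<rho>*l')\<^sup>2 = (\<rho>*l)\<^sup>2"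
    using nz by (simp add: field_simps power2_eq_square)
  then have "l' = l \<or> l' = -l"
    using \<open>\<rho> \<noteq> 0\<close> by (auto simp: power_mult_distrib power2_eq_iff)
  moreover have "a' = a*l/l'" and "c' = c*l'/l"
    using s1 s3 nz \<open>\<rho> \<noteq> 0\<close> by (simp_all add: field_simps)
  ultimately show ?thesis
    using nz assms(3,4) by (auto simp: negq_def)
qed

lemma roots_of_preimage:
  fixes s1 s2 s3 s4 r \<rho> \<mu> :: "'a::field"
  assumes "s1*s2*s3*s4 = 1" "r\<^sup>2 = s3*s4" "\<rho> \<noteq> 0"
  shows "roots_of \<rho> (s3/r, \<mu>*(r/\<rho>), s1*r, r/\<rho>) = (s1,s2,s3,s4)"
proof -
  have "s1 \<noteq> 0" "s3 \<noteq> 0" "r \<noteq> 0"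
    using assms(1,2) by auto
  then have "s1*r/(\<rho>*(r/\<rho>)) = s1" and "s3/r*\<rho>*(r/\<rho>) = s3"
    and "inverse (s1*r*\<rho>*(r/\<rho>)) = inverse (s1*r\<^sup>2)" and "\<rho>*(r/\<rho>)/(s3/r) = r\<^sup>2/s3"
    using \<open>\<rho> \<noteq> 0\<close> by (simp_all add: field_simps power2_eq_square)
  moreover have "inverse (s1*r\<^sup>2) = s2"
    unfolding assms(2) by (rule inverse_unique) (use assms(1) in \<open>simp add: ac_simps\<close>)
  moreover have "r\<^sup>2/s3 = s4"
    using assms(2) \<open>s3 \<noteq> 0\<close> by simp
  ultimately show ?thesis
    unfolding roots_of_def prod.case by (simp only:)
qed

section \<open>Feasible quadruples\<close>

definition esym_target :: "'a::field \<Rightarrow> 'a \<Rightarrow> 'a quad \<Rightarrow> 'a quad" where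
  "esym_target \<rho> q p = (case p of (\<mu>,\<phi>,ws,we) \<Rightarrow>
     let e1 = \<rho>*(we - q*\<phi>)/(\<mu>*(1+q\<^sup>2)) in (e1, ws - \<mu>/q - q/\<mu>, \<rho>*\<phi> + q*\<mu>*e1, 1))"

lemma feasible_iff_esym4_roots_of:
  fixes a c l \<rho> q \<mu> :: "'a::field"
  assumes "a \<noteq> 0" "c \<noteq> 0" "l \<noteq> 0" "\<rho> \<noteq> 0" "\<mu> \<noteq> 0" and \<rho>: "\<rho>\<^sup>2 = q*\<mu>"
  shows "feasible q (a, \<mu>*l, c, l) (\<mu>,\<phi>,ws,we) \<longleftrightarrow>
    (case esym4 (roots_of \<rho> (a, \<mu>*l, c, l)) of (e1,e2,e3,e4) \<Rightarrow>
       \<phi> = -\<rho>*e1 + e3/\<rho> \<and> ws = e2 + \<mu>/q + q/\<mu> \<and> we = (\<mu>/\<rho>)*e1 + (\<rho>/\<mu>)*e3 \<and> e4 = 1)"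
proof -
  define s1 s2 s3 s4 where "s1 = c/(\<rho>*l)" and "s2 = inverse (c*\<rho>*l)"
    and "s3 = a*\<rho>*l" and "s4 = \<rho>*l/a"
  note s_defs = s1_def s2_def s3_def s4_def
  have q: "q = \<rho>\<^sup>2/\<mu>"
    using \<rho> \<open>\<mu> \<noteq> 0\<close> by simp
  have "(c + inverse c) * (l - inverse l) - (a + inverse a) * (\<mu>*l*q - inverse (\<mu>*l) * inverse q)
      = -\<rho>*(s1+s2+s3+s4) + (s1*s2*s3+s1*s2*s4+s1*s3*s4+s2*s3*s4)/\<rho>"
    using assms(1-5) unfolding s_defs q by (simp add: field_simps power2_eq_square)
  moreover have "(c + inverse c) * (a + inverse a) + (\<mu>*l + inverse (\<mu>*l)) * (l*q + inverse l * inverse q)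
      = (s1*s2+s1*s3+s1*s4+s2*s3+s2*s4+s3*s4) + \<mu>/q + q/\<mu>"
    using assms(1-5) unfolding s_defs q by (simp add: field_simps power2_eq_square)
  moreover have "(a + inverse a) * (\<mu>*l + inverse (\<mu>*l)) + (c + inverse c) * (l*q + inverse l * inverse q)
      = (\<mu>/\<rho>)*(s1+s2+s3+s4) + (\<rho>/\<mu>)*(s1*s2*s3+s1*s2*s4+s1*s3*s4+s2*s3*s4)"
    using assms(1-5) unfolding s_defs q by (simp add: field_simps power2_eq_square)
  moreover have "s1*s2*s3*s4 = 1"
    using assms(1-5) unfolding s_defs by (simp add: field_simps)
  moreover have "roots_of \<rho> (a, \<mu>*l, c, l) = (s1,s2,s3,s4)"
    by (simp add: roots_of_def s_defs)
  ultimately show ?thesis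
    using assms(3) by (auto simp: feasible_def esym4_def)
qed

lemma esym_target_iff:
  fixes \<rho> q \<mu> :: "'a::field"
  assumes "\<rho> \<noteq> 0" "\<mu> \<noteq> 0" and \<rho>: "\<rho>\<^sup>2 = q*\<mu>" and "1 + q\<^sup>2 \<noteq> 0"
  shows "(e1,e2,e3,e4) = esym_target \<rho> q (\<mu>,\<phi>,ws,we) \<longleftrightarrow>
    \<phi> = -\<rho>*e1 + e3/\<rho> \<and> ws = e2 + \<mu>/q + q/\<mu> \<and> we = (\<mu>/\<rho>)*e1 + (\<rho>/\<mu>)*e3 \<and> e4 = 1"
proof -
  have q: "q = \<rho>\<^sup>2/\<mu>"
    using \<rho> \<open>\<mu> \<noteq> 0\<close> by simp
  have e3: "\<phi> = -\<rho>*e1 + e3/\<rho> \<longleftrightarrow> e3 = \<rho>*\<phi> + q*\<mu>*e1"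
    using assms(1,2) unfolding q by (auto simp: field_simps power2_eq_square)
  define k where "k = \<mu>*(1+q\<^sup>2)/\<rho>"
  have "k \<noteq> 0"
    using assms(1,2,4) by (simp add: k_def)
  have we: "(\<mu>/\<rho>)*e1 + (\<rho>/\<mu>)*(\<rho>*\<phi> + q*\<mu>*e1) = k * e1 + q*\<phi>"
    using assms(1,2) unfolding k_def q by (simp add: field_simps power2_eq_square)
  have "we = k * e1 + q*\<phi> \<longleftrightarrow> e1 = (we - q*\<phi>)/k"
    using \<open>k \<noteq> 0\<close> by (auto simp: field_simps)
  also have "(we - q*\<phi>)/k = \<rho>*(we - q*\<phi>)/(\<mu>*(1+q\<^sup>2))"
    by (simp add: k_def)
  finally have e1: "we = k * e1 + q*\<phi> \<longleftrightarrow> e1 = \<rho>*(we - q*\<phi>)/(\<mu>*(1+q\<^sup>2))" .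
  have we_iff: "e3 = \<rho>*\<phi> + q*\<mu>*e1 \<Longrightarrow>
      we = (\<mu>/\<rho>)*e1 + (\<rho>/\<mu>)*e3 \<longleftrightarrow> e1 = \<rho>*(we - q*\<phi>)/(\<mu>*(1+q\<^sup>2))"
    using we e1 by simp
  have ws: "e2 = ws - \<mu>/q - q/\<mu> \<longleftrightarrow> ws = e2 + \<mu>/q + q/\<mu>"
    by (auto simp: algebra_simps)
  have target: "(e1,e2,e3,e4) = esym_target \<rho> q (\<mu>,\<phi>,ws,we) \<longleftrightarrow>
      e1 = \<rho>*(we - q*\<phi>)/(\<mu>*(1+q\<^sup>2)) \<and> e2 = ws - \<mu>/q - q/\<mu> \<and> e3 = \<rho>*\<phi> + q*\<mu>*e1 \<and> e4 = 1"
    by (auto simp: esym_target_def Let_def)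
  show ?thesis
    unfolding target e3 using we_iff ws by blast
qed

definition root_feasible :: "'a::field \<Rightarrow> 'a \<Rightarrow> 'a quad \<Rightarrow> 'a quad \<Rightarrow> bool" where
  "root_feasible \<rho> \<mu> e x \<longleftrightarrow>
     (case x of (a,b,c,l) \<Rightarrow> nonzero4 x \<and> b = \<mu>*l \<and> esym4 (roots_of \<rho> x) = e)"

lemma feasible_iff_root_feasible:
  fixes q \<mu> \<rho> :: "'a::field"
  assumes "q \<noteq> 0" "1 + q\<^sup>2 \<noteq> 0" "\<mu> \<noteq> 0" and \<rho>: "\<rho>\<^sup>2 = q*\<mu>"
  shows "nonzero4 x \<and> feasible q x (\<mu>,\<phi>,ws,we) \<longleftrightarrow>
    root_feasible \<rho> \<mu> (esym_target \<rho> q (\<mu>,\<phi>,ws,we)) x"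
proof -
  obtain a b c l where x: "x = (a,b,c,l)"
    by (cases x)
  have "\<rho> \<noteq> 0"
    using assms by auto
  have "nonzero4 x \<Longrightarrow> feasible q x (\<mu>,\<phi>,ws,we) \<Longrightarrow> b = \<mu>*l"
    by (simp add: x nonzero4_def feasible_def)
  then have "nonzero4 x \<and> feasible q x (\<mu>,\<phi>,ws,we) \<longleftrightarrow>
      nonzero4 x \<and> b = \<mu>*l \<and> feasible q (a, \<mu>*l, c, l) (\<mu>,\<phi>,ws,we)"
    by (auto simp: x)
  also have "\<dots> \<longleftrightarrow> nonzero4 x \<and> b = \<mu>*l \<and>
      esym4 (roots_of \<rho> (a, \<mu>*l, c, l)) = esym_target \<rho> q (\<mu>,\<phi>,ws,we)"
  proof (intro conj_cong refl)
    assume "nonzero4 x"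
    then have "a \<noteq> 0" "c \<noteq> 0" "l \<noteq> 0"
      by (simp_all add: x nonzero4_def)
    obtain e1 e2 e3 e4 where e: "esym4 (roots_of \<rho> (a, \<mu>*l, c, l)) = (e1,e2,e3,e4)"
      by (metis prod_cases4)
    show "feasible q (a, \<mu>*l, c, l) (\<mu>,\<phi>,ws,we) \<longleftrightarrow>
        esym4 (roots_of \<rho> (a, \<mu>*l, c, l)) = esym_target \<rho> q (\<mu>,\<phi>,ws,we)"
      unfolding feasible_iff_esym4_roots_of[OF \<open>a \<noteq> 0\<close> \<open>c \<noteq> 0\<close> \<open>l \<noteq> 0\<close> \<open>\<rho> \<noteq> 0\<close> \<open>\<mu> \<noteq> 0\<close> \<rho>]
        e esym_target_iff[OF \<open>\<rho> \<noteq> 0\<close> \<open>\<mu> \<noteq> 0\<close> \<rho> assms(2)]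
      by simp
  qed
  also have "\<dots> \<longleftrightarrow> root_feasible \<rho> \<mu> (esym_target \<rho> q (\<mu>,\<phi>,ws,we)) x"
    by (auto simp: root_feasible_def x)
  finally show ?thesis .
qed

lemma equivclp_invariant:
  assumes "\<And>x y. r x y \<Longrightarrow> P x \<longleftrightarrow> P y" and "equivclp r x y" and "P x"
  shows "P y"
  using assms(2,3) by (induction rule: equivclp_induct) (use assms(1) in blast)+

lemma root_feasible_esym4: "root_feasible \<rho> \<mu> e x \<Longrightarrow> esym4 (roots_of \<rho> x) = e"
  by (auto simp: root_feasible_def split: prod.splits)

lemma root_feasible_exists:
  fixes \<rho> \<mu> :: "'a::alg_closed_field"
  assumes "\<rho> \<noteq> 0" "\<mu> \<noteq> 0"
  shows "\<exists>x. root_feasible \<rho> \<mu> (e1,e2,e3,1) x"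
proof -
  obtain s1 s2 s3 s4 where s: "esym4 (s1,s2,s3,s4) = (e1,e2,e3,1)"
    using esym4_surj by (metis prod_cases4)
  then have prod: "s1*s2*s3*s4 = 1"
    by (simp add: esym4_def)
  obtain r where r: "r\<^sup>2 = s3*s4"
    using nth_root_exists[of 2] by auto
  have "s1 \<noteq> 0" "s3 \<noteq> 0" "r \<noteq> 0"
    using prod r by auto
  then have "nonzero4 (s3/r, \<mu>*(r/\<rho>), s1*r, r/\<rho>)"
    using assms by (simp add: nonzero4_def)
  moreover have "esym4 (roots_of \<rho> (s3/r, \<mu>*(r/\<rho>), s1*r, r/\<rho>)) = (e1,e2,e3,1)"
    unfolding roots_of_preimage[OF prod r \<open>\<rho> \<noteq> 0\<close>] by (rule s)
  ultimately have "root_feasible \<rho> \<mu> (e1,e2,e3,1) (s3/r, \<mu>*(r/\<rho>), s1*r, r/\<rho>)"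
    by (simp add: root_feasible_def)
  then show ?thesis ..
qed

lemma root_feasible_gen_step_iff:
  fixes \<rho> q \<mu> :: "'a::field"
  assumes sq: "\<forall>x. (sq x)\<^sup>2 = x" and \<rho>: "\<rho>\<^sup>2 = q*\<mu>" and "q \<noteq> 0"
    and step: "gen_step sq q x y"
  shows "root_feasible \<rho> \<mu> e x \<longleftrightarrow> root_feasible \<rho> \<mu> e y"
proof -
  obtain a b c l where x: "x = (a,b,c,l)"
    by (cases x)
  obtain s1 s2 s3 s4 where roots: "roots_of \<rho> x = (s1,s2,s3,s4)"
    by (cases "roots_of \<rho> x")
  from step consider "y = negq x" | "y = act12 x" | "y = act34 x" | "y = act23 sq q x"
    by (auto simp: gen_step_def)
  then show ?thesis
  proof cases
    case 1
    then show ?thesis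
      using roots_of_negq[of \<rho> x] by (auto simp: x negq_def root_feasible_def nonzero4_def)
  next
    case 2
    then show ?thesis
      using roots_of_act12[OF roots] roots
      by (auto simp: x act12_def root_feasible_def nonzero4_def esym4_swap)
  next
    case 3
    then show ?thesis
      using roots_of_act34[OF roots] roots
      by (auto simp: x act34_def root_feasible_def nonzero4_def esym4_swap)
  next
    case 4
    define s where "s = sq (a*b*c*l*q)"
    have y: "y = (a/s, b/s, c/s, l/s)"
      using 4 by (simp add: x act23_def s_def Let_def)
    have "nonzero4 x \<longleftrightarrow> nonzero4 y"
    proof
      assume "nonzero4 x"
      moreover have "s\<^sup>2 = a*b*c*l*q"
        using sq by (simp add: s_def)
      ultimately have "s \<noteq> 0"
        using \<open>q \<noteq> 0\<close> by (auto simp: x nonzero4_def)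
      with \<open>nonzero4 x\<close> show "nonzero4 y"
        by (simp add: x y nonzero4_def)
    qed (auto simp: x y nonzero4_def)
    moreover have "esym4 (roots_of \<rho> y) = esym4 (roots_of \<rho> x)"
      if "nonzero4 x" "b = \<mu>*l"
      using roots_of_act23[OF sq \<rho> \<open>q \<noteq> 0\<close> that[unfolded x] roots[unfolded x]] 4 roots
      by (simp add: x esym4_swap)
    ultimately show ?thesis
      by (auto simp: root_feasible_def x y nonzero4_def)
  qed
qed

lemma gen_step_transposes_roots:
  fixes \<rho> q \<mu> :: "'a::field"
  assumes sq: "\<forall>x. (sq x)\<^sup>2 = x" and \<rho>: "\<rho>\<^sup>2 = q*\<mu>" and "q \<noteq> 0"
    and z: "root_feasible \<rho> \<mu> e z" and roots: "roots_of \<rho> z = (s1,s2,s3,s4)"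
  shows "\<exists>z'. gen_step sq q z z' \<and> roots_of \<rho> z' = (s2,s1,s3,s4)"
    and "\<exists>z'. gen_step sq q z z' \<and> roots_of \<rho> z' = (s1,s3,s2,s4)"
    and "\<exists>z'. gen_step sq q z z' \<and> roots_of \<rho> z' = (s1,s2,s4,s3)"
proof -
  show "\<exists>z'. gen_step sq q z z' \<and> roots_of \<rho> z' = (s2,s1,s3,s4)"
    using roots_of_act12[OF roots] unfolding gen_step_def by blast
  show "\<exists>z'. gen_step sq q z z' \<and> roots_of \<rho> z' = (s1,s2,s4,s3)"
    using roots_of_act34[OF roots] unfolding gen_step_def by blast
  obtain a b c l where zz: "z = (a,b,c,l)"
    by (cases z)
  with z have "nonzero4 (a,b,c,l)" "b = \<mu>*l"
    by (auto simp: root_feasible_def)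
  from roots_of_act23[OF sq \<rho> \<open>q \<noteq> 0\<close> this roots[unfolded zz]]
  have "roots_of \<rho> (act23 sq q z) = (s1,s3,s2,s4)"
    by (simp add: zz)
  then show "\<exists>z'. gen_step sq q z z' \<and> roots_of \<rho> z' = (s1,s3,s2,s4)"
    unfolding gen_step_def by blast
qed

lemma root_feasible_connected:
  fixes \<rho> q \<mu> :: "'a::field"
  assumes sq: "\<forall>x. (sq x)\<^sup>2 = x" and \<rho>: "\<rho>\<^sup>2 = q*\<mu>" and "q \<noteq> 0"
    and x: "root_feasible \<rho> \<mu> e x" and y: "root_feasible \<rho> \<mu> e y"
  shows "equivclp (gen_step sq q) x y"
proof -
  define P where "P s1 s2 s3 s4 \<longleftrightarrow> (\<exists>z. equivclp (gen_step sq q) x z \<and>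
      root_feasible \<rho> \<mu> e z \<and> roots_of \<rho> z = (s1,s2,s3,s4))" for s1 s2 s3 s4
  have move: "P t1 t2 t3 t4"
    if P: "P s1 s2 s3 s4" and step: "\<And>z. root_feasible \<rho> \<mu> e z \<Longrightarrow> roots_of \<rho> z = (s1,s2,s3,s4) \<Longrightarrow>
      \<exists>z'. gen_step sq q z z' \<and> roots_of \<rho> z' = (t1,t2,t3,t4)"
    for s1 s2 s3 s4 t1 t2 t3 t4
  proof -
    obtain z where z: "equivclp (gen_step sq q) x z" "root_feasible \<rho> \<mu> e z"
      "roots_of \<rho> z = (s1,s2,s3,s4)"
      using P unfolding P_def by blast
    then obtain z' where z': "gen_step sq q z z'" "roots_of \<rho> z' = (t1,t2,t3,t4)"
      using step by blast
    have "equivclp (gen_step sq q) x z'"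
      using z(1) z'(1) by (blast intro: equivclp_trans)
    moreover have "root_feasible \<rho> \<mu> e z'"
      using root_feasible_gen_step_iff[OF sq \<rho> \<open>q \<noteq> 0\<close> z'(1)] z(2) by blast
    ultimately show ?thesis
      using z'(2) unfolding P_def by blast
  qed
  note swaps = gen_step_transposes_roots[OF sq \<rho> \<open>q \<noteq> 0\<close>]
  have swap12: "P s2 s1 s3 s4" if "P s1 s2 s3 s4" for s1 s2 s3 s4
    by (rule move[OF that]) (rule swaps(1))
  have swap23: "P s1 s3 s2 s4" if "P s1 s2 s3 s4" for s1 s2 s3 s4
    by (rule move[OF that]) (rule swaps(2))
  have swap34: "P s1 s2 s4 s3" if "P s1 s2 s3 s4" for s1 s2 s3 s4
    by (rule move[OF that]) (rule swaps(3))
  obtain s1 s2 s3 s4 where sx: "roots_of \<rho> x = (s1,s2,s3,s4)"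
    by (cases "roots_of \<rho> x")
  obtain t1 t2 t3 t4 where ty: "roots_of \<rho> y = (t1,t2,t3,t4)"
    by (cases "roots_of \<rho> y")
  have "P s1 s2 s3 s4"
    unfolding P_def using x sx by (intro exI[of _ x]) simp
  moreover have "esym4 (s1,s2,s3,s4) = esym4 (t1,t2,t3,t4)"
    using root_feasible_esym4[OF x] root_feasible_esym4[OF y] sx ty by simp
  ultimately have "P t1 t2 t3 t4"
    using esym4_eq_transfer[of P s1 s2 s3 s4 t1 t2 t3 t4] swap12 swap23 swap34 by blast
  then obtain z where z: "equivclp (gen_step sq q) x z" "root_feasible \<rho> \<mu> e z"
    "roots_of \<rho> y = roots_of \<rho> z"
    using ty unfolding P_def by metis
  obtain a b c l where zz: "z = (a,b,c,l)"
    by (cases z)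
  obtain a' b' c' l' where yy: "y = (a',b',c',l')"
    by (cases y)
  have "nonzero4 (a,b,c,l)" "b = \<mu>*l" "nonzero4 (a',b',c',l')" "b' = \<mu>*l'"
    using z(2) y by (auto simp: zz yy root_feasible_def)
  moreover have "\<rho> \<noteq> 0"
    using \<rho> \<open>q \<noteq> 0\<close> \<open>nonzero4 (a,b,c,l)\<close> \<open>b = \<mu>*l\<close> by (auto simp: nonzero4_def)
  ultimately have "y = z \<or> y = negq z"
    using roots_of_eq_imp_eq_or_negq z(3) unfolding zz yy by blast
  moreover have "equivclp (gen_step sq q) z (negq z)"
    by (rule r_into_equivclp) (simp add: gen_step_def)
  ultimately show ?thesis
    using z(1) equivclp_trans by metis
qed

lemma approx_iff_root_feasible:
  fixes \<rho> q \<mu> :: "'a::field"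
  assumes sq: "\<forall>x. (sq x)\<^sup>2 = x" and \<rho>: "\<rho>\<^sup>2 = q*\<mu>" and "q \<noteq> 0"
    and x: "root_feasible \<rho> \<mu> e x"
  shows "approx sq q x y \<longleftrightarrow> root_feasible \<rho> \<mu> e y"
proof
  assume "approx sq q x y"
  then show "root_feasible \<rho> \<mu> e y"
    unfolding approx_def
    using equivclp_invariant[where P = "root_feasible \<rho> \<mu> e",
        OF root_feasible_gen_step_iff[OF sq \<rho> \<open>q \<noteq> 0\<close>] _ x]
    by blast
next
  assume y: "root_feasible \<rho> \<mu> e y"
  then show "approx sq q x y"
    using x root_feasible_connected[OF sq \<rho> \<open>q \<noteq> 0\<close> x y]
    by (auto simp: approx_def root_feasible_def split: prod.splits)
qed

theorem theorem5p2:
  fixes q mu phi ws we :: "'a::alg_closed_field"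
    and sq :: "'a \<Rightarrow> 'a" and d :: nat
  assumes "root_of_unity_order q d" and "d \<notin> {1, 2, 4}"
    and "\<forall>x. (sq x)\<^sup>2 = x"
    and "mu \<noteq> 0"
  shows "(\<exists>x. nonzero4 x \<and> feasible q x (mu, phi, ws, we)) \<and>
         (\<forall>x. nonzero4 x \<and> feasible q x (mu, phi, ws, we) \<longrightarrow>
              {y. approx sq q x y} = {y. nonzero4 y \<and> feasible q y (mu, phi, ws, we)})"
proof -
  have "q \<noteq> 0" "1 + q\<^sup>2 \<noteq> 0"
    using assms(1,2) by (simp_all add: root_of_unity_order_nonzero one_plus_square_nonzero)
  define \<rho> where "\<rho> = sq (q * mu)"
  have \<rho>: "\<rho>\<^sup>2 = q * mu"
    using assms(3) by (simp add: \<rho>_def)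
  then have "\<rho> \<noteq> 0"
    using \<open>q \<noteq> 0\<close> \<open>mu \<noteq> 0\<close> by auto
  obtain e1 e2 e3 where e: "esym_target \<rho> q (mu, phi, ws, we) = (e1, e2, e3, 1)"
    by (simp add: esym_target_def Let_def)
  have feasible: "nonzero4 x \<and> feasible q x (mu, phi, ws, we) \<longleftrightarrow> root_feasible \<rho> mu (e1, e2, e3, 1) x"
    for x using feasible_iff_root_feasible[OF \<open>q \<noteq> 0\<close> \<open>1 + q\<^sup>2 \<noteq> 0\<close> \<open>mu \<noteq> 0\<close> \<rho>] e by simp
  have "approx sq q x y \<longleftrightarrow> root_feasible \<rho> mu (e1, e2, e3, 1) y"
    if "root_feasible \<rho> mu (e1, e2, e3, 1) x" for x y
    by (rule approx_iff_root_feasible[OF assms(3) \<rho> \<open>q \<noteq> 0\<close> that])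
  then show ?thesis
    using root_feasible_exists[OF \<open>\<rho> \<noteq> 0\<close> \<open>mu \<noteq> 0\<close>] by (auto simp: feasible)
qed

end
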